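(* For all integers $n\ge1$, $$\mathcal A\cap\gamma_{n+1}(\mathcal R)=\mathcal A_{2n-1}.$$
   Context: $\mathcal R=\mathcal R(\mathbb F_2)$ is the Riordan group of pairs $(g,f)$ of formal power series over $\mathbb F_2$ with $g=1+\cdots$, $f=t+\cdots$, product $(g_1,f_1)(g_2,f_2)=(g_1\cdot(g_2\circ f_1),\,f_2\circ f_1)$; it is a pro-2 group (inverse limit of its finite truncations) with the corresponding $t$-adic topology. $\mathcal A=\{(g,t)\}$ is the Appell subgroup and $\mathcal A_m=\{(g,t):g\equiv1\pmod{t^{m+1}}\}$. The lower central series is $\gamma_1(\mathcal R)=\mathcal R$, $\gamma_i(\mathcal R)=[\gamma_{i-1}(\mathcal R),\mathcal R]$, where $[X,Y]$ is the smallest closed subgroup containing all commutators $x^{-1}y^{-1}xy$, $x\in X$, $y\in Y$. *)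

theory Defs
  imports "HOL-Library.Z2" "HOL-Computational_Algebra.Formal_Power_Series" "HOL-Algebra.Group"
begin

type_synonym rio = "bit fps \<times> bit fps"

definition riordan :: "rio monoid" where
  "riordan = \<lparr> carrier = {(g, f). fps_nth g 0 = 1 \<and> fps_nth f 0 = 0 \<and> fps_nth f 1 = 1},
               mult = (\<lambda>(g1, f1) (g2, f2). (g1 * (g2 oo f1), f2 oo f1)),
               one = (1, fps_X) \<rparr>"

definition agree_upto :: "nat \<Rightarrow> rio \<Rightarrow> rio \<Rightarrow> bool" where
  "agree_upto N x y \<longleftrightarrow> (\<forall>k<N. fps_nth (fst x) k = fps_nth (fst y) k \<and> fps_nth (snd x) k = fps_nth (snd y) k)"

text \<open>Closed subsets of R in the t-adic (inverse-limit) topology.\<close>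
definition rclosed :: "rio set \<Rightarrow> bool" where
  "rclosed S \<longleftrightarrow> S \<subseteq> carrier riordan \<and>
     (\<forall>x\<in>carrier riordan. (\<forall>N. \<exists>s\<in>S. agree_upto N s x) \<longrightarrow> x \<in> S)"

definition commutator_set :: "rio set \<Rightarrow> rio set \<Rightarrow> rio set" where
  "commutator_set X Y = {inv\<^bsub>riordan\<^esub> x \<otimes>\<^bsub>riordan\<^esub> inv\<^bsub>riordan\<^esub> y \<otimes>\<^bsub>riordan\<^esub> x \<otimes>\<^bsub>riordan\<^esub> y | x y. x \<in> X \<and> y \<in> Y}"

definition closed_comm :: "rio set \<Rightarrow> rio set \<Rightarrow> rio set" where
  "closed_comm X Y = \<Inter>{H. subgroup H riordan \<and> rclosed H \<and> commutator_set X Y \<subseteq> H}"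

text \<open>Lower central series: lcs i = gamma_i for i \<ge> 1 (lcs 0 is set to R as a dummy).\<close>
fun lcs :: "nat \<Rightarrow> rio set" where
  "lcs 0 = carrier riordan"
| "lcs (Suc 0) = carrier riordan"
| "lcs (Suc (Suc i)) = closed_comm (lcs (Suc i)) (carrier riordan)"

definition appell :: "rio set" where
  "appell = {(g, fps_X) | g. fps_nth g 0 = 1}"

definition appell_m :: "nat \<Rightarrow> rio set" where
  "appell_m m = {(g, fps_X) | g. fps_nth g 0 = 1 \<and> (\<forall>k. 1 \<le> k \<and> k \<le> m \<longrightarrow> fps_nth g k = 0)}"

end

theory Submission
  imports Defs
begin

(* Over F_2 squaring is additive, so phi = t + O(t^M) gives phi^2 = t^2 + O(t^(2M)); hence
   substituting phi into a series of even order 2k changes it only by O(t^(2k+M)), one order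
   better than in general.  Consequently, if g = 1 mod t^(2n) and f = t mod t^(2n+2), then (g, f)
   commutes with every element of R modulo the next such congruence.  These congruences therefore
   define closed subgroups containing the successive terms gamma_(n+1), and their Appell parts
   are the A_(2n-1).
   Conversely, the commutator of (1 + t^(2n+1), t), which lies in gamma_(n+1) by induction, with
   (1, t + t^(N-2n))^(-1) is an Appell element (c, t) with c = 1 + t^N mod t^(N+1), for every
   N > 2n+1.  Products of these approximate every element of A_(2n+1) t-adically, so A_(2n+1)
   lies in every closed subgroup containing [gamma_(n+1), R]. *)

unbundle fps_syntax

section \<open>Congruences of power series modulo powers of t\<close>

definition fps_cong :: "nat \<Rightarrow> 'a::zero fps \<Rightarrow> 'a fps \<Rightarrow> bool" where
  "fps_cong M a b \<longleftrightarrow> (\<forall>i<M. a $ i = b $ i)"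

lemma fps_cong_refl [simp]: "fps_cong M a a"
  by (simp add: fps_cong_def)

lemma fps_cong_sym: "fps_cong M a b \<Longrightarrow> fps_cong M b a"
  by (simp add: fps_cong_def)

lemma fps_cong_trans [trans]: "fps_cong M a b \<Longrightarrow> fps_cong M b c \<Longrightarrow> fps_cong M a c"
  by (simp add: fps_cong_def)

lemma fps_cong_mono: "fps_cong M a b \<Longrightarrow> K \<le> M \<Longrightarrow> fps_cong K a b"
  by (simp add: fps_cong_def)

lemma fps_cong_add: "fps_cong M a b \<Longrightarrow> fps_cong M c d \<Longrightarrow> fps_cong M (a + c) (b + d)"
  by (simp add: fps_cong_def)

lemma fps_cong_diff_0_iff: "fps_cong M (a - b) (0 :: 'a::ab_group_add fps) \<longleftrightarrow> fps_cong M a b"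
  by (simp add: fps_cong_def)

lemma fps_cong_mult:
  "fps_cong M a b \<Longrightarrow> fps_cong M c d \<Longrightarrow> fps_cong M (a * c) (b * d :: 'a::semiring_0 fps)"
  unfolding fps_cong_def fps_mult_nth by (auto intro!: sum.cong)

lemma fps_cong_power: "fps_cong M a b \<Longrightarrow> fps_cong M (a ^ k) (b ^ k :: 'a::semiring_1 fps)"
  by (induction k) (auto intro: fps_cong_mult)

lemma fps_cong_compose:
  assumes "fps_cong M a b" and "fps_cong M c (d :: 'a::semiring_1 fps)"
  shows "fps_cong M (a oo c) (b oo d)"
  using assms fps_cong_power[OF assms(2)] by (auto simp: fps_cong_def fps_compose_nth)

lemma fps_cong_X_power_mult:
  "fps_cong K a b \<Longrightarrow> fps_cong (M + K) (fps_X ^ M * a) (fps_X ^ M * (b :: 'a::comm_ring_1 fps))"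
  by (simp add: fps_cong_def fps_X_power_mult_nth)

lemma fps_cong_X_power_mult_0: "fps_cong M (fps_X ^ M * a) (0 :: 'a::comm_ring_1 fps)"
  by (simp add: fps_cong_def fps_X_power_mult_nth)

lemma fps_cong_0_imp_eq_X_power_mult:
  "fps_cong M a 0 \<Longrightarrow> a = fps_X ^ M * fps_shift M (a :: 'a::comm_ring_1 fps)"
  by (rule fps_ext) (simp add: fps_cong_def fps_X_power_mult_nth)

lemma fps_cong_2_X_iff: "fps_cong 2 f fps_X \<longleftrightarrow> f $ 0 = 0 \<and> f $ 1 = (1 :: 'a::comm_ring_1)"
  by (auto simp: fps_cong_def less_2_cases_iff)

section \<open>Substitution in characteristic two\<close>

context
  assumes char_2: "(2 :: 'a::idom) = 0"
begin

lemma fps_square_add_char_2: "(a + b) ^ 2 = a ^ 2 + (b ^ 2 :: 'a fps)"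
proof -
  have "(2 :: 'a fps) = 0"
    using char_2 by (simp add: numeral_fps_const)
  then show ?thesis
    by (simp add: power2_sum)
qed

lemma fps_square_near_X:
  assumes f: "fps_cong M f (fps_X :: 'a fps)" and M: "2 \<le> M"
  obtains w where "f ^ 2 = fps_X ^ 2 * w" and "fps_cong M w 1"
proof -
  define e where "e = fps_shift M (f - fps_X)"
  have "f - fps_X = fps_X ^ M * e"
    unfolding e_def using f by (intro fps_cong_0_imp_eq_X_power_mult) (simp add: fps_cong_diff_0_iff)
  then have "f = fps_X + fps_X ^ M * e"
    by (simp add: diff_eq_eq add.commute)
  then have "f ^ 2 = fps_X ^ 2 + (fps_X ^ M * e) ^ 2"
    by (simp only: fps_square_add_char_2)
  also have "(fps_X ^ M * e) ^ 2 = fps_X ^ 2 * (fps_X ^ (2 * M - 2) * e ^ 2)"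
  proof -
    have "M * 2 = 2 + (2 * M - 2)"
      using M by simp
    then show ?thesis
      by (simp only: power_mult_distrib power_mult[symmetric] power_add mult.assoc)
  qed
  finally have "f ^ 2 = fps_X ^ 2 * (1 + fps_X ^ (2 * M - 2) * e ^ 2)"
    by (simp add: distrib_left)
  moreover have "fps_cong (2 * M - 2) (1 + fps_X ^ (2 * M - 2) * e ^ 2) 1"
    using fps_cong_add[OF fps_cong_refl fps_cong_X_power_mult_0] by simp
  then have "fps_cong M (1 + fps_X ^ (2 * M - 2) * e ^ 2) 1"
    by (rule fps_cong_mono) (use M in simp)
  ultimately show thesis
    by (rule that)
qed

lemma fps_compose_cong_even_order:
  assumes a: "fps_cong (2 * k) a 0" and f: "fps_cong M f (fps_X :: 'a fps)" and M: "2 \<le> M"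
  shows "fps_cong (2 * k + M) (a oo f) a"
proof -
  obtain w where w: "f ^ 2 = fps_X ^ 2 * w" "fps_cong M w 1"
    using fps_square_near_X[OF f M] .
  have f0: "f $ 0 = 0"
    using f M by (simp add: fps_cong_def)
  define a' where "a' = fps_shift (2 * k) a"
  have a_eq: "a = fps_X ^ (2 * k) * a'"
    unfolding a'_def using a by (rule fps_cong_0_imp_eq_X_power_mult)
  have "a oo f = (fps_X ^ (2 * k) oo f) * (a' oo f)"
    by (subst a_eq) (rule fps_compose_mult_distrib[OF f0])
  also have "fps_X ^ (2 * k) oo f = (f ^ 2) ^ k"
    using fps_X_power_compose[OF f0, of "2 * k"] by (simp only: power_mult)
  also have "\<dots> = fps_X ^ (2 * k) * w ^ k"
    by (simp add: w(1) power_mult_distrib power_mult)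
  finally have "a oo f = fps_X ^ (2 * k) * (w ^ k * (a' oo f))"
    by (simp add: mult.assoc)
  moreover have "fps_cong M (w ^ k * (a' oo f)) (1 ^ k * (a' oo fps_X))"
    by (intro fps_cong_mult fps_cong_power fps_cong_compose w(2) f fps_cong_refl)
  ultimately show ?thesis
    using fps_cong_X_power_mult[of M _ _ "2 * k"] a_eq by simp
qed

lemma fps_compose_commute_cong:
  assumes f: "fps_cong (2 * k) f fps_X" and \<phi>: "fps_cong 2 \<phi> (fps_X :: 'a fps)" and k: "1 \<le> k"
  shows "fps_cong (2 * k + 2) (\<phi> oo f) (f oo \<phi>)"
proof -
  define \<psi> where "\<psi> = \<phi> - fps_X"
  define \<epsilon> where "\<epsilon> = f - fps_X"
  have "fps_cong (2 * 1) \<psi> 0"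
    using \<phi> by (simp add: \<psi>_def fps_cong_diff_0_iff)
  then have \<psi>_cong: "fps_cong (2 * 1 + 2 * k) (\<psi> oo f) \<psi>"
    by (rule fps_compose_cong_even_order[OF _ f]) (use k in simp)
  have "fps_cong (2 * k) \<epsilon> 0"
    using f by (simp add: \<epsilon>_def fps_cong_diff_0_iff)
  then have "fps_cong (2 * k + 2) (\<epsilon> oo \<phi>) \<epsilon>"
    by (rule fps_compose_cong_even_order[OF _ \<phi> order.refl])
  then have \<epsilon>_cong: "fps_cong (2 * k + 2) \<epsilon> (\<epsilon> oo \<phi>)"
    by (rule fps_cong_sym)
  have f0: "f $ 0 = 0" and \<phi>0: "\<phi> $ 0 = 0"
    using f \<phi> k by (simp_all add: fps_cong_def)
  have "\<phi> oo f = f + (\<psi> oo f)"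
    using f0 by (simp add: \<psi>_def fps_compose_sub_distrib)
  also have "fps_cong (2 * k + 2) \<dots> (f + \<psi>)"
    using \<psi>_cong by (intro fps_cong_add fps_cong_refl) (simp add: add.commute)
  also have "f + \<psi> = \<phi> + \<epsilon>"
    by (simp add: \<psi>_def \<epsilon>_def)
  also have "fps_cong (2 * k + 2) \<dots> (\<phi> + (\<epsilon> oo \<phi>))"
    using \<epsilon>_cong by (intro fps_cong_add fps_cong_refl)
  also have "\<phi> + (\<epsilon> oo \<phi>) = f oo \<phi>"
    using \<phi>0 by (simp add: \<epsilon>_def fps_compose_sub_distrib)
  finally show ?thesis .
qed

lemma one_plus_X_power_odd_power_cong:
  assumes k: "odd k" and j: "1 \<le> j"
  shows "fps_cong (j + 1) ((1 + fps_X ^ j) ^ k) (1 + fps_X ^ j :: 'a fps)"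
proof -
  obtain m where k_eq: "k = 2 * m + 1"
    using k by (rule oddE)
  have "(1 + fps_X ^ j) ^ k = ((1 + fps_X ^ j) ^ 2) ^ m * (1 + fps_X ^ j)"
    unfolding k_eq power_add power_mult by simp
  also have "(1 + fps_X ^ j) ^ 2 = (1 + fps_X ^ (2 * j) :: 'a fps)"
    by (simp add: fps_square_add_char_2 power_mult[symmetric] mult.commute)
  finally have "(1 + fps_X ^ j) ^ k = (1 + fps_X ^ (2 * j)) ^ m * (1 + fps_X ^ j :: 'a fps)" .
  moreover have "fps_cong (j + 1) (1 + fps_X ^ (2 * j)) (1 :: 'a fps)"
    using j by (simp add: fps_cong_def)
  then have "fps_cong (j + 1) ((1 + fps_X ^ (2 * j)) ^ m * (1 + fps_X ^ j)) (1 ^ m * (1 + fps_X ^ j :: 'a fps))"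
    by (intro fps_cong_mult fps_cong_power fps_cong_refl)
  ultimately show ?thesis
    by simp
qed

lemma one_plus_X_power_compose_cong:
  assumes k: "odd k" and N: "k < N"
  shows "fps_cong (N + 1) ((1 + fps_X ^ k) oo (fps_X + fps_X ^ (N - k + 1)))
           ((1 + fps_X ^ k) * (1 + fps_X ^ N :: 'a fps))"
proof -
  define j where "j = N - k"
  have j: "1 \<le> j" "N = k + j"
    using N by (simp_all add: j_def)
  have "fps_X + fps_X ^ (N - k + 1) = fps_X * (1 + fps_X ^ j :: 'a fps)"
    by (simp add: j_def algebra_simps)
  then have "(1 + fps_X ^ k) oo (fps_X + fps_X ^ (N - k + 1)) = 1 + fps_X ^ k * (1 + fps_X ^ j :: 'a fps) ^ k"
    by (simp add: fps_compose_add_distrib fps_X_power_compose power_mult_distrib)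
  also have "fps_cong (N + 1) \<dots> (1 + fps_X ^ k * (1 + fps_X ^ j))"
    using fps_cong_X_power_mult[OF one_plus_X_power_odd_power_cong[OF k j(1)], of k] j(2)
    by (intro fps_cong_add fps_cong_refl) (simp add: add.assoc)
  also have "1 + fps_X ^ k * (1 + fps_X ^ j) = 1 + fps_X ^ k + (fps_X ^ N :: 'a fps)"
    by (simp add: j(2) algebra_simps power_add)
  also have "fps_cong (N + 1) \<dots> ((1 + fps_X ^ k) * (1 + fps_X ^ N))"
  proof -
    have "fps_cong (N + 1) (fps_X ^ (N + k) * 1) (0 :: 'a fps)"
      by (rule fps_cong_mono[OF fps_cong_X_power_mult_0]) (use odd_pos[OF k] in simp)
    then have "fps_cong (N + 1) (1 + fps_X ^ k + fps_X ^ N + fps_X ^ (N + k) * 1)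
                 (1 + fps_X ^ k + fps_X ^ N + 0 :: 'a fps)"
      by (intro fps_cong_add fps_cong_refl)
    moreover have "1 + fps_X ^ k + fps_X ^ N + fps_X ^ (N + k) * 1 = (1 + fps_X ^ k) * (1 + fps_X ^ N :: 'a fps)"
      by (simp add: algebra_simps power_add)
    ultimately have "fps_cong (N + 1) ((1 + fps_X ^ k) * (1 + fps_X ^ N)) (1 + fps_X ^ k + fps_X ^ N :: 'a fps)"
      by simp
    then show ?thesis
      by (rule fps_cong_sym)
  qed
  finally show ?thesis .
qed

end

section \<open>The Riordan group and its lower central series\<close>

lemma riordan_carrier_iff: "(g, f) \<in> carrier riordan \<longleftrightarrow> g $ 0 = 1 \<and> f $ 0 = 0 \<and> f $ 1 = 1"
  by (simp add: riordan_def)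

lemma riordan_mult: "(g1, f1) \<otimes>\<^bsub>riordan\<^esub> (g2, f2) = (g1 * (g2 oo f1), f2 oo f1)"
  by (simp add: riordan_def)

lemma riordan_one: "\<one>\<^bsub>riordan\<^esub> = (1, fps_X)"
  by (simp add: riordan_def)

lemma group_riordan: "group riordan"
proof (rule groupI)
  fix x y
  assume "x \<in> carrier riordan" "y \<in> carrier riordan"
  then show "x \<otimes>\<^bsub>riordan\<^esub> y \<in> carrier riordan"
    by (cases x, cases y) (simp add: riordan_mult riordan_carrier_iff fps_compose_nth)
next
  show "\<one>\<^bsub>riordan\<^esub> \<in> carrier riordan"
    by (simp add: riordan_one riordan_carrier_iff)
next
  fix x y z
  assume "x \<in> carrier riordan" "y \<in> carrier riordan" "z \<in> carrier riordan"
  then show "x \<otimes>\<^bsub>riordan\<^esub> y \<otimes>\<^bsub>riordan\<^esub> z = x \<otimes>\<^bsub>riordan\<^esub> (y \<otimes>\<^bsub>riordan\<^esub> z)"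
    by (cases x, cases y, cases z)
      (simp add: riordan_mult riordan_carrier_iff fps_compose_mult_distrib fps_compose_assoc mult.assoc)
next
  fix x
  assume "x \<in> carrier riordan"
  then show "\<one>\<^bsub>riordan\<^esub> \<otimes>\<^bsub>riordan\<^esub> x = x"
    by (cases x) (simp add: riordan_mult riordan_one riordan_carrier_iff)
next
  fix x
  assume x: "x \<in> carrier riordan"
  obtain g f where x_eq: "x = (g, f)"
    by (cases x)
  have gf: "g $ 0 = 1" "f $ 0 = 0" "f $ 1 = 1"
    using x by (simp_all add: x_eq riordan_carrier_iff)
  have "(inverse g oo fps_inv f, fps_inv f) \<in> carrier riordan"
    using gf by (simp add: riordan_carrier_iff fps_inv_def)
  moreover have "(inverse g oo fps_inv f, fps_inv f) \<otimes>\<^bsub>riordan\<^esub> x = \<one>\<^bsub>riordan\<^esub>"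
    using gf fps_inv_right[of f]
    by (simp add: x_eq riordan_mult riordan_one fps_compose_mult_distrib[symmetric] inverse_mult_eq_1 fps_inv_def)
  ultimately show "\<exists>y\<in>carrier riordan. y \<otimes>\<^bsub>riordan\<^esub> x = \<one>\<^bsub>riordan\<^esub>"
    by blast
qed

interpretation riordan: group riordan
  by (rule group_riordan)

abbreviation riordan_commutator :: "rio \<Rightarrow> rio \<Rightarrow> rio" where
  "riordan_commutator x y \<equiv> inv\<^bsub>riordan\<^esub> x \<otimes>\<^bsub>riordan\<^esub> inv\<^bsub>riordan\<^esub> y \<otimes>\<^bsub>riordan\<^esub> x \<otimes>\<^bsub>riordan\<^esub> y"

lemma commutator_in_commutator_set:
  "x \<in> X \<Longrightarrow> y \<in> Y \<Longrightarrow> riordan_commutator x y \<in> commutator_set X Y"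
  unfolding commutator_set_def by blast

lemma riordan_inv_appell: "q $ 0 = 1 \<Longrightarrow> inv\<^bsub>riordan\<^esub> (q, fps_X) = (inverse q, fps_X)"
  by (rule riordan.inv_equality) (auto simp: riordan_mult riordan_one riordan_carrier_iff inverse_mult_eq_1)

lemma appell_commutator:
  assumes q: "q $ 0 = 1" and \<phi>: "\<phi> $ 0 = 0" "\<phi> $ 1 = 1"
  defines "y \<equiv> inv\<^bsub>riordan\<^esub> (1, \<phi>)"
  shows "riordan_commutator (q, fps_X) y = (inverse q * (q oo \<phi>), fps_X)"
proof -
  have \<phi>_carrier: "(1, \<phi>) \<in> carrier riordan"
    using \<phi> by (simp add: riordan_carrier_iff)
  have c_carrier: "(inverse q * (q oo \<phi>), fps_X) \<in> carrier riordan"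
    using q \<phi>(1) by (simp add: riordan_carrier_iff fps_compose_nth)
  have "inv\<^bsub>riordan\<^esub> (q, fps_X) \<otimes>\<^bsub>riordan\<^esub> inv\<^bsub>riordan\<^esub> y \<otimes>\<^bsub>riordan\<^esub> (q, fps_X)
      = (inverse q * (q oo \<phi>), fps_X) \<otimes>\<^bsub>riordan\<^esub> (1, \<phi>)"
    using \<phi>_carrier q \<phi>(1) by (simp add: y_def riordan_inv_appell riordan_mult)
  then show ?thesis
    using \<phi>_carrier c_carrier by (simp add: y_def riordan.m_assoc)
qed

definition riordan_cong :: "nat \<Rightarrow> rio \<Rightarrow> rio \<Rightarrow> bool" where
  "riordan_cong M x y \<longleftrightarrow> fps_cong M (fst x) (fst y) \<and> fps_cong (M + 2) (snd x) (snd y)"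

definition riordan_level :: "nat \<Rightarrow> rio set" where
  "riordan_level n = {x \<in> carrier riordan. riordan_cong (2 * n) x \<one>\<^bsub>riordan\<^esub>}"

lemma riordan_cong_refl [simp]: "riordan_cong M x x"
  by (simp add: riordan_cong_def)

lemma riordan_cong_sym: "riordan_cong M x y \<Longrightarrow> riordan_cong M y x"
  by (simp add: riordan_cong_def fps_cong_sym)

lemma riordan_cong_trans: "riordan_cong M x y \<Longrightarrow> riordan_cong M y z \<Longrightarrow> riordan_cong M x z"
  by (auto simp: riordan_cong_def intro: fps_cong_trans)

lemma riordan_cong_mult:
  assumes "riordan_cong M x x'" and "riordan_cong M y y'"
  shows "riordan_cong M (x \<otimes>\<^bsub>riordan\<^esub> y) (x' \<otimes>\<^bsub>riordan\<^esub> y')"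
proof -
  obtain g f g' f' h \<phi> h' \<phi>' where xy: "x = (g, f)" "x' = (g', f')" "y = (h, \<phi>)" "y' = (h', \<phi>')"
    by (cases x, cases x', cases y, cases y')
  have g: "fps_cong M g g'" and f: "fps_cong (M + 2) f f'"
    and h: "fps_cong M h h'" and \<phi>: "fps_cong (M + 2) \<phi> \<phi>'"
    using assms by (simp_all add: xy riordan_cong_def)
  have "fps_cong M f f'"
    using f by (rule fps_cong_mono) simp
  with g h f \<phi> show ?thesis
    by (simp add: xy riordan_mult riordan_cong_def fps_cong_mult fps_cong_compose)
qed

lemma agree_upto_imp_riordan_cong: "agree_upto (M + 2) x y \<Longrightarrow> riordan_cong M x y"
  by (simp add: agree_upto_def riordan_cong_def fps_cong_def)

lemma riordan_level_commute_cong: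
  assumes x: "x \<in> riordan_level n" and y: "y \<in> carrier riordan"
  shows "riordan_cong (2 * n + 2) (x \<otimes>\<^bsub>riordan\<^esub> y) (y \<otimes>\<^bsub>riordan\<^esub> x)"
proof -
  obtain g f h \<phi> where xy: "x = (g, f)" "y = (h, \<phi>)"
    by (cases x, cases y)
  have g: "fps_cong (2 * n) (g - 1) 0" and f: "fps_cong (2 * (n + 1)) f fps_X"
    using x by (simp_all add: xy riordan_level_def riordan_cong_def riordan_one fps_cong_diff_0_iff)
  have \<phi>: "fps_cong 2 \<phi> fps_X"
    using y by (simp add: xy riordan_carrier_iff fps_cong_2_X_iff)
  have "fps_cong (2 * n + 2) (g * (h oo f)) (g * (h oo fps_X))"
    using f by (intro fps_cong_mult fps_cong_compose fps_cong_refl) simp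
  moreover have "fps_cong (2 * n + 2) ((g - 1) oo \<phi>) (g - 1)"
    using fps_compose_cong_even_order[OF bit_2_eq_0 g \<phi>] by simp
  then have "fps_cong (2 * n + 2) ((g oo \<phi>) - 1 + 1) (g - 1 + 1)"
    by (intro fps_cong_add fps_cong_refl) (simp add: fps_compose_sub_distrib)
  then have "fps_cong (2 * n + 2) (h * (g oo \<phi>)) (h * g)"
    by (intro fps_cong_mult fps_cong_refl) simp
  ultimately have "fps_cong (2 * n + 2) (g * (h oo f)) (h * (g oo \<phi>))"
    by (metis fps_cong_sym fps_cong_trans fps_compose_fps_X mult.commute)
  moreover have "fps_cong (2 * (n + 1) + 2) (\<phi> oo f) (f oo \<phi>)"
    using fps_compose_commute_cong[OF bit_2_eq_0 f \<phi>] by simp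
  ultimately show ?thesis
    by (simp add: xy riordan_mult riordan_cong_def)
qed

lemma subgroup_riordan_level: "subgroup (riordan_level n) riordan"
proof (rule riordan.subgroupI)
  show "riordan_level n \<subseteq> carrier riordan"
    by (auto simp: riordan_level_def)
  have "\<one>\<^bsub>riordan\<^esub> \<in> riordan_level n"
    by (simp add: riordan_level_def)
  then show "riordan_level n \<noteq> {}"
    by blast
next
  fix x
  assume "x \<in> riordan_level n"
  then have x: "x \<in> carrier riordan" "riordan_cong (2 * n) \<one>\<^bsub>riordan\<^esub> x"
    by (auto simp: riordan_level_def riordan_cong_sym)
  then have "riordan_cong (2 * n) (inv\<^bsub>riordan\<^esub> x \<otimes>\<^bsub>riordan\<^esub> \<one>\<^bsub>riordan\<^esub>)
              (inv\<^bsub>riordan\<^esub> x \<otimes>\<^bsub>riordan\<^esub> x)"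
    by (intro riordan_cong_mult riordan_cong_refl)
  with x show "inv\<^bsub>riordan\<^esub> x \<in> riordan_level n"
    by (simp add: riordan_level_def)
next
  fix x y
  assume "x \<in> riordan_level n" "y \<in> riordan_level n"
  then show "x \<otimes>\<^bsub>riordan\<^esub> y \<in> riordan_level n"
    using riordan_cong_mult[of "2 * n" x "\<one>\<^bsub>riordan\<^esub>" y "\<one>\<^bsub>riordan\<^esub>"]
    by (auto simp: riordan_level_def)
qed

lemma rclosed_riordan_level: "rclosed (riordan_level n)"
  unfolding rclosed_def
proof (intro conjI ballI impI)
  show "riordan_level n \<subseteq> carrier riordan"
    by (auto simp: riordan_level_def)
  fix x
  assume "x \<in> carrier riordan" and "\<forall>N. \<exists>s\<in>riordan_level n. agree_upto N s x"
  then obtain s where x: "x \<in> carrier riordan" and s: "s \<in> riordan_level n" "agree_upto (2 * n + 2) s x"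
    by blast
  have "riordan_cong (2 * n) x s"
    using s(2) by (rule riordan_cong_sym[OF agree_upto_imp_riordan_cong])
  with x s(1) show "x \<in> riordan_level n"
    by (auto simp: riordan_level_def intro: riordan_cong_trans)
qed

lemma commutator_in_riordan_level:
  assumes x: "x \<in> riordan_level n" and y: "y \<in> carrier riordan"
  shows "riordan_commutator x y \<in> riordan_level (Suc n)"
proof -
  have x_carrier: "x \<in> carrier riordan"
    using x by (simp add: riordan_level_def)
  let ?yx = "y \<otimes>\<^bsub>riordan\<^esub> x" and ?xy = "x \<otimes>\<^bsub>riordan\<^esub> y"
  have "riordan_commutator x y = inv\<^bsub>riordan\<^esub> ?yx \<otimes>\<^bsub>riordan\<^esub> ?xy"
    using x_carrier y by (simp add: riordan.inv_mult_group riordan.m_assoc)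
  moreover have "riordan_cong (2 * n + 2) (inv\<^bsub>riordan\<^esub> ?yx \<otimes>\<^bsub>riordan\<^esub> ?xy)
                   (inv\<^bsub>riordan\<^esub> ?yx \<otimes>\<^bsub>riordan\<^esub> ?yx)"
    using riordan_level_commute_cong[OF x y] by (rule riordan_cong_mult[OF riordan_cong_refl])
  ultimately show ?thesis
    using x_carrier y by (simp add: riordan_level_def)
qed

lemma lcs_subset_riordan_level: "lcs (Suc n) \<subseteq> riordan_level n"
proof (induction n)
  case 0
  show ?case
    by (auto simp: riordan_level_def riordan_cong_def riordan_one riordan_carrier_iff fps_cong_def less_Suc_eq)
next
  case (Suc n)
  then have "commutator_set (lcs (Suc n)) (carrier riordan) \<subseteq> riordan_level (Suc n)"
    by (auto simp: commutator_set_def intro!: commutator_in_riordan_level)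
  then show ?case
    using subgroup_riordan_level rclosed_riordan_level by (auto simp: closed_comm_def)
qed

lemma fps_cong_Suc_mult_one_plus_X_power:
  fixes q g :: "bit fps"
  assumes q: "fps_cong M q g" "q $ M \<noteq> g $ M" and q0: "q $ 0 = 1"
  shows "fps_cong (Suc M) (q * (1 + fps_X ^ M)) g"
  unfolding fps_cong_def
proof (intro allI impI)
  fix i
  assume "i < Suc M"
  then consider "i < M" | "i = M"
    by linarith
  then show "(q * (1 + fps_X ^ M)) $ i = g $ i"
  proof cases
    case 1
    then show ?thesis
      using q(1) by (simp add: fps_cong_def distrib_left fps_X_power_mult_right_nth)
  next
    case 2
    with q(2) q0 show ?thesis
      by (cases "q $ M"; cases "g $ M") (simp_all add: distrib_left fps_X_power_mult_right_nth)
  qed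
qed

lemma appell_in_rclosed:
  assumes H: "rclosed H" and g0: "g $ 0 = 1"
    and approx: "\<And>N. \<exists>q. (q, fps_X) \<in> H \<and> fps_cong N q g"
  shows "(g, fps_X) \<in> H"
proof -
  have "\<exists>s\<in>H. agree_upto N s (g, fps_X)" for N
  proof -
    obtain q where "(q, fps_X) \<in> H" "fps_cong N q g"
      using approx by blast
    then show ?thesis
      by (intro bexI[of _ "(q, fps_X)"]) (simp_all add: agree_upto_def fps_cong_def)
  qed
  moreover have "(g, fps_X) \<in> carrier riordan"
    using g0 by (simp add: riordan_carrier_iff)
  ultimately show ?thesis
    using H by (simp add: rclosed_def)
qed

lemma appell_m_subset_closed_subgroup:
  assumes H: "subgroup H riordan" "rclosed H"
    and approx: "\<And>N. m < N \<Longrightarrow> \<exists>c. (c, fps_X) \<in> H \<and> fps_cong (N + 1) c (1 + fps_X ^ N)"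
  shows "appell_m m \<subseteq> H"
proof
  interpret H: subgroup H riordan
    by (rule H(1))
  have one: "(1, fps_X) \<in> H"
    using H.one_closed by (simp add: riordan_one)
  fix a
  assume "a \<in> appell_m m"
  then obtain g where a: "a = (g, fps_X)" and g0: "g $ 0 = 1" and g: "fps_cong (m + 1) 1 g"
    by (auto simp: appell_m_def fps_cong_def less_Suc_eq_le)
  have "\<exists>q. (q, fps_X) \<in> H \<and> fps_cong M q g" for M
  proof (induction M)
    case 0
    with one show ?case
      by (auto simp: fps_cong_def)
  next
    case (Suc M)
    then obtain q where q: "(q, fps_X) \<in> H" "fps_cong M q g"
      by blast
    consider "Suc M \<le> m + 1" | "q $ M = g $ M" | "m < M" "q $ M \<noteq> g $ M"
      by linarith
    then show ?case
    proof cases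
      case 1
      with one g show ?thesis
        by (blast intro: fps_cong_mono[OF g])
    next
      case 2
      with q show ?thesis
        by (auto simp: fps_cong_def less_Suc_eq)
    next
      case 3
      obtain c where c: "(c, fps_X) \<in> H" "fps_cong (M + 1) c (1 + fps_X ^ M)"
        using approx[OF 3(1)] by blast
      have "(q, fps_X) \<otimes>\<^bsub>riordan\<^esub> (c, fps_X) \<in> H"
        using q(1) c(1) by (rule H.m_closed)
      then have qc: "(q * c, fps_X) \<in> H"
        by (simp add: riordan_mult)
      have q0: "q $ 0 = 1"
        using q(2) g0 3(1) by (simp add: fps_cong_def)
      have "fps_cong (Suc M) (q * c) (q * (1 + fps_X ^ M))"
        using c(2) by (intro fps_cong_mult fps_cong_refl) simp
      also have "fps_cong (Suc M) (q * (1 + fps_X ^ M)) g"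
        using q(2) 3(2) q0 by (rule fps_cong_Suc_mult_one_plus_X_power)
      finally show ?thesis
        using qc by blast
    qed
  qed
  then show "a \<in> H"
    unfolding a by (rule appell_in_rclosed[OF H(2) g0])
qed

lemma appell_m_subset_lcs: "appell_m (2 * n - 1) \<subseteq> lcs (Suc n)"
proof (induction n)
  case 0
  show ?case
    by (auto simp: appell_m_def riordan_carrier_iff)
next
  case (Suc n)
  have "appell_m (2 * n + 1) \<subseteq> H"
    if H: "subgroup H riordan" "rclosed H" "commutator_set (lcs (Suc n)) (carrier riordan) \<subseteq> H" for H
  proof (rule appell_m_subset_closed_subgroup[OF H(1,2)])
    fix N
    assume N: "2 * n + 1 < N"
    define q :: "bit fps" where "q = 1 + fps_X ^ (2 * n + 1)"
    define \<phi> :: "bit fps" where "\<phi> = fps_X + fps_X ^ (N - (2 * n + 1) + 1)"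
    have q0: "q $ 0 = 1" and \<phi>: "\<phi> $ 0 = 0" "\<phi> $ 1 = 1"
      using N by (simp_all add: q_def \<phi>_def)
    have "(q, fps_X) \<in> appell_m (2 * n - 1)"
      unfolding appell_m_def q_def by auto
    then have "(q, fps_X) \<in> lcs (Suc n)"
      using Suc.IH by blast
    moreover have "inv\<^bsub>riordan\<^esub> (1, \<phi>) \<in> carrier riordan"
      using \<phi> by (simp add: riordan_carrier_iff)
    ultimately have "(inverse q * (q oo \<phi>), fps_X) \<in> commutator_set (lcs (Suc n)) (carrier riordan)"
      unfolding appell_commutator[OF q0 \<phi>, symmetric] by (rule commutator_in_commutator_set)
    then have "(inverse q * (q oo \<phi>), fps_X) \<in> H"
      using H(3) by blast
    moreover have "fps_cong (N + 1) (inverse q * (q oo \<phi>)) (inverse q * (q * (1 + fps_X ^ N)))"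
      unfolding q_def \<phi>_def
      by (intro fps_cong_mult fps_cong_refl one_plus_X_power_compose_cong[OF bit_2_eq_0 _ N]) simp
    then have "fps_cong (N + 1) (inverse q * (q oo \<phi>)) (1 + fps_X ^ N)"
      using q0 by (simp add: mult.assoc[symmetric] inverse_mult_eq_1)
    ultimately show "\<exists>c. (c, fps_X) \<in> H \<and> fps_cong (N + 1) c (1 + fps_X ^ N)"
      by blast
  qed
  then show ?case
    by (auto simp: closed_comm_def)
qed

lemma appell_inter_riordan_level: "appell \<inter> riordan_level n = appell_m (2 * n - 1)"
proof -
  have "fps_cong (2 * n) g 1 \<longleftrightarrow> (\<forall>k. 1 \<le> k \<and> k \<le> 2 * n - 1 \<longrightarrow> g $ k = 0)"
    if "g $ 0 = 1" for g :: "bit fps"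
    using that by (auto simp: fps_cong_def)
  then show ?thesis
    by (auto simp: appell_def appell_m_def riordan_level_def riordan_cong_def riordan_one riordan_carrier_iff)
qed

theorem lemma10:
  fixes n :: nat
  assumes "n \<ge> 1"
  shows "appell \<inter> lcs (n + 1) = appell_m (2 * n - 1)"
proof
  show "appell \<inter> lcs (n + 1) \<subseteq> appell_m (2 * n - 1)"
    using lcs_subset_riordan_level[of n] appell_inter_riordan_level[of n] by auto
  show "appell_m (2 * n - 1) \<subseteq> appell \<inter> lcs (n + 1)"
    using appell_m_subset_lcs[of n] by (auto simp: appell_m_def appell_def)
qed

end
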